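(* Let $\gamma\in\Gamma$, $n'\in\mathbb{N}_+$ and $v_1,v_2\in V$. If $v_1\preceq v_2$ and $\|v_1\|_1<\|v_2\|_1$, then $\|\varphi^{(\gamma)}_{n'}(v_1)\|_1<\|\varphi^{(\gamma)}_{n'}(v_2)\|_1$.
   Context: $\sigma(x)=\max(0,x)$; $\mathrm{RL}(n,n')$ ($n,n'\in\mathbb{N}_+$) is the set of maps $h:\mathbb{R}^n\to\mathbb{R}^{n'}$, $h(x)_i=\sigma(\langle x,w_i\rangle+b_i)$ for some $W\in\mathbb{R}^{n'\times n}$ with rows $w_i$, $b\in\mathbb{R}^{n'}$; convention: $\mathrm{RL}(0,n')$ are constant maps $\{0\}\to\mathbb{R}^{n'}$ with $\mathcal{H}_{n'}(\mathcal{S}_h)={\rm e}_0$. $S_h(x)_i=1$ iff $\langle x,w_i\rangle+b_i>0$ else $0$; $\mathcal{S}_h=\{S_h(x)\}$; $|s|=\sum_is_i$. $V$: sequences $(v_j)_{j\in\mathbb{N}}$ of nonnegative integers with finite sum, $\|v\|_1=\sum_jv_j$; ${\rm e}_i$ has $({\rm e}_i)_j=\delta_{ij}$; $v\preceq w$ iff $\sum_{j\ge J}v_j\le\sum_{j\ge J}w_j$ for all $J\in\mathbb{N}$; for finite families, $\max_i(v^{(i)})_J=\max_i\sum_{j\ge J}v^{(i)}_j-\max_i\sum_{j\ge J+1}v^{(i)}_j$. $\mathcal{H}_{n'}(\mathcal{S})=(|\{s\in\mathcal{S}:|s|=j\}|)_j$. $\Gamma$: families $(\gamma_{n,n'})_{n'\in\mathbb{N}_+,n\in\{0,\dots,n'\}}$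 in $V$ with (i) $\max\{\mathcal{H}_{n'}(\mathcal{S}_h):h\in\mathrm{RL}(n,n')\}\preceq\gamma_{n,n'}$, (ii) $n\le\tilde n\le n'\Rightarrow\gamma_{n,n'}\preceq\gamma_{\tilde n,n'}$. $\mathrm{cl}_{i^*}(v)_i=v_i$ ($i<i^*$), $\sum_{j\ge i^*}v_j$ ($i=i^*$), $0$ ($i>i^*$). $\varphi^{(\gamma)}_{n'}(v)=\sum_{n=0}^\infty v_n\,\mathrm{cl}_{\min(n,n')}(\gamma_{\min(n,n'),n'})$. *)

theory Defs
  imports Complex_Main
begin

definition inV :: "(nat \<Rightarrow> nat) \<Rightarrow> bool" where
  "inV v \<longleftrightarrow> finite {j. v j \<noteq> 0}"

definition norm1 :: "(nat \<Rightarrow> nat) \<Rightarrow> nat" where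
  "norm1 v = (\<Sum>j\<in>{j. v j \<noteq> 0}. v j)"

definition tailsum :: "(nat \<Rightarrow> nat) \<Rightarrow> nat \<Rightarrow> nat" where
  "tailsum v J = (\<Sum>j\<in>{j. J \<le> j \<and> v j \<noteq> 0}. v j)"

definition unitvec :: "nat \<Rightarrow> nat \<Rightarrow> nat" where
  "unitvec i = (\<lambda>j. if j = i then 1 else 0)"

definition preceq :: "(nat \<Rightarrow> nat) \<Rightarrow> (nat \<Rightarrow> nat) \<Rightarrow> bool" where
  "preceq v w \<longleftrightarrow> (\<forall>J. tailsum v J \<le> tailsum w J)"

text \<open>Maximum of a finite nonempty family F of sequences.\<close>
definition maxfam :: "(nat \<Rightarrow> nat) set \<Rightarrow> nat \<Rightarrow> nat" where
  "maxfam F J = Max ((\<lambda>v. tailsum v J) ` F) - Max ((\<lambda>v. tailsum v (Suc J)) ` F)"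

text \<open>Activation patterns of the ReLU layer x |-> sigma(Wx+b) from R^n to R^n',
  patterns represented as the set of active indices {i < n'. ...}; x ranges over
  functions nat => real of which only the first n coordinates matter.\<close>
definition act_patterns :: "nat \<Rightarrow> nat \<Rightarrow> (nat \<Rightarrow> nat \<Rightarrow> real) \<Rightarrow> (nat \<Rightarrow> real) \<Rightarrow> nat set set" where
  "act_patterns n n' W b =
     {{i. i < n' \<and> (\<Sum>k<n. W i k * x k) + b i > 0} | x :: nat \<Rightarrow> real. True}"

definition hist :: "nat set set \<Rightarrow> nat \<Rightarrow> nat" where
  "hist S = (\<lambda>j. card {s \<in> S. card s = j})"

definition layer_hist :: "nat \<Rightarrow> nat \<Rightarrow> (nat \<Rightarrow> nat \<Rightarrow> real) \<Rightarrow> (nat \<Rightarrow> real) \<Rightarrow> nat \<Rightarrow> nat" where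
  "layer_hist n n' W b = (if n = 0 then unitvec 0 else hist (act_patterns n n' W b))"

definition max_hist :: "nat \<Rightarrow> nat \<Rightarrow> nat \<Rightarrow> nat" where
  "max_hist n n' = maxfam {layer_hist n n' W b | W b. True}"

definition inGamma :: "(nat \<Rightarrow> nat \<Rightarrow> nat \<Rightarrow> nat) \<Rightarrow> bool" where
  "inGamma \<gamma> \<longleftrightarrow>
     (\<forall>n' n. 1 \<le> n' \<and> n \<le> n' \<longrightarrow> inV (\<gamma> n n') \<and> preceq (max_hist n n') (\<gamma> n n')) \<and>
     (\<forall>n' n m. 1 \<le> n' \<and> n \<le> m \<and> m \<le> n' \<longrightarrow> preceq (\<gamma> n n') (\<gamma> m n'))"

definition cl :: "nat \<Rightarrow> (nat \<Rightarrow> nat) \<Rightarrow> nat \<Rightarrow> nat" where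
  "cl istar v = (\<lambda>i. if i < istar then v i else if i = istar then tailsum v istar else 0)"

definition phi :: "(nat \<Rightarrow> nat \<Rightarrow> nat \<Rightarrow> nat) \<Rightarrow> nat \<Rightarrow> (nat \<Rightarrow> nat) \<Rightarrow> nat \<Rightarrow> nat" where
  "phi \<gamma> n' v = (\<lambda>i. \<Sum>n\<in>{n. v n \<noteq> 0}. v n * cl (min n n') (\<gamma> (min n n') n') i)"

end

theory Submission
  imports Defs
begin

text \<open>Clipping preserves the 1-norm, so \<open>\<parallel>\<phi>(v)\<parallel>\<^sub>1 = \<Sum>\<^sub>n v\<^sub>n g(n)\<close> where g(n) is
  the 1-norm of \<open>\<gamma>\<close> at (min(n,n'), n'). The monotonicity axiom of \<open>\<Gamma>\<close> makes g
  monotone, and the domination axiom at n = 0, where the histogram is \<open>e\<^sub>0\<close>, gives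
  g(0) \<ge> 1. Summation by parts writes \<open>\<Sum>\<^sub>n v\<^sub>n g(n)\<close> as g(0) times the 1-norm of v
  plus a combination of the tail sums of v with the nonnegative increments of g
  as coefficients, so it is monotone in \<open>\<preceq>\<close> and strictly so when the 1-norm grows.\<close>

lemma norm1_eq_tailsum_0: "norm1 v = tailsum v 0"
  unfolding norm1_def tailsum_def by simp

lemma preceq_norm1_le: "preceq v w \<Longrightarrow> norm1 v \<le> norm1 w"
  unfolding preceq_def norm1_eq_tailsum_0 by blast

lemma inV_imp_bounded_support:
  assumes "inV v" obtains N where "\<forall>i>N. v i = 0"
  using assms unfolding inV_def finite_nat_set_iff_bounded_le by (meson leD mem_Collect_eq)

lemma support_subset_atMost:
  fixes v :: "nat \<Rightarrow> 'a::zero"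
  shows "\<forall>i>N. v i = 0 \<Longrightarrow> {j. v j \<noteq> 0} \<subseteq> {..N}"
  by (metis (mono_tags) atMost_iff leI mem_Collect_eq subsetI)

lemma tailsum_eq_sum_atLeastAtMost:
  assumes "\<forall>i>N. v i = 0"
  shows "tailsum v J = (\<Sum>n=J..N. v n)"
  unfolding tailsum_def
  by (rule sum.mono_neutral_left) (use support_subset_atMost[OF assms] in auto)

lemma norm1_eq_sum_atMost:
  assumes "\<forall>i>N. v i = 0"
  shows "norm1 v = (\<Sum>n\<le>N. v n)"
  by (simp add: norm1_eq_tailsum_0 tailsum_eq_sum_atLeastAtMost[OF assms] atLeast0AtMost)

lemma weighted_sum_eq_sum_atMost:
  fixes v g :: "nat \<Rightarrow> nat"
  assumes "\<forall>i>N. v i = 0"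
  shows "(\<Sum>n\<in>{n. v n \<noteq> 0}. v n * g n) = (\<Sum>n\<le>N. v n * g n)"
  by (rule sum.mono_neutral_left) (use support_subset_atMost[OF assms] in auto)

lemma mono_eq_telescope_nat:
  fixes g :: "nat \<Rightarrow> nat"
  assumes "mono g"
  shows "g n = g 0 + (\<Sum>j<n. g (Suc j) - g j)"
proof (induction n)
  case (Suc n)
  have "g n \<le> g (Suc n)" using assms by (simp add: monoD)
  with Suc show ?case by simp
qed simp

lemma sum_mult_by_parts:
  fixes g :: "nat \<Rightarrow> nat"
  assumes "mono g"
  shows "(\<Sum>n\<le>N. v n * g n)
    = g 0 * (\<Sum>n\<le>N. v n) + (\<Sum>j<N. (g (Suc j) - g j) * (\<Sum>n=Suc j..N. v n))"
proof -
  have "(\<Sum>n\<le>N. v n * g n) = (\<Sum>n\<le>N. v n * g 0 + (\<Sum>j<n. v n * (g (Suc j) - g j)))"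
    by (subst mono_eq_telescope_nat[OF assms]) (simp add: algebra_simps sum_distrib_left)
  also have "\<dots> = g 0 * (\<Sum>n\<le>N. v n) + (\<Sum>n\<le>N. \<Sum>j<n. v n * (g (Suc j) - g j))"
    by (simp add: sum.distrib sum_distrib_left mult.commute)
  also have "(\<Sum>n\<le>N. \<Sum>j<n. v n * (g (Suc j) - g j))
      = (\<Sum>j<N. (g (Suc j) - g j) * (\<Sum>n=Suc j..N. v n))"
    by (simp add: sum.nested_swap' sum_distrib_left mult.commute)
  finally show ?thesis .
qed

lemma weighted_sum_strict_mono_preceq:
  fixes g :: "nat \<Rightarrow> nat"
  assumes "mono g" "0 < g 0" "inV v" "inV w" "preceq v w" "norm1 v < norm1 w"
  shows "(\<Sum>n\<in>{n. v n \<noteq> 0}. v n * g n) < (\<Sum>n\<in>{n. w n \<noteq> 0}. w n * g n)"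
proof -
  obtain Nv where Nv: "\<forall>i>Nv. v i = 0" using inV_imp_bounded_support[OF assms(3)] by blast
  obtain Nw where Nw: "\<forall>i>Nw. w i = 0" using inV_imp_bounded_support[OF assms(4)] by blast
  define N where "N = max Nv Nw"
  have v: "\<forall>i>N. v i = 0" and w: "\<forall>i>N. w i = 0"
    using Nv Nw by (auto simp: N_def)
  have tails: "(\<Sum>n=J..N. v n) \<le> (\<Sum>n=J..N. w n)" for J
    using assms(5) by (simp add: preceq_def tailsum_eq_sum_atLeastAtMost[OF v]
        tailsum_eq_sum_atLeastAtMost[OF w])
  have "g 0 * (\<Sum>n\<le>N. v n) < g 0 * (\<Sum>n\<le>N. w n)"
    using assms(2,6) by (simp add: norm1_eq_sum_atMost[OF v] norm1_eq_sum_atMost[OF w])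
  moreover have "(\<Sum>j<N. (g (Suc j) - g j) * (\<Sum>n=Suc j..N. v n))
      \<le> (\<Sum>j<N. (g (Suc j) - g j) * (\<Sum>n=Suc j..N. w n))"
    by (intro sum_mono mult_le_mono2 tails)
  ultimately have "(\<Sum>n\<le>N. v n * g n) < (\<Sum>n\<le>N. w n * g n)"
    unfolding sum_mult_by_parts[OF assms(1)] by linarith
  then show ?thesis
    by (simp only: weighted_sum_eq_sum_atMost[OF v] weighted_sum_eq_sum_atMost[OF w])
qed

lemma norm1_cl:
  assumes "inV v"
  shows "norm1 (cl m v) = norm1 v"
proof -
  obtain N0 where "\<forall>i>N0. v i = 0" using inV_imp_bounded_support[OF assms] by blast
  then have v: "\<forall>i>max N0 m. v i = 0" by simp
  have cl: "\<forall>i>m. cl m v i = 0" by (simp add: cl_def)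
  have "norm1 (cl m v) = (\<Sum>i<m. cl m v i) + cl m v m"
    by (simp add: norm1_eq_sum_atMost[OF cl] lessThan_Suc_atMost[symmetric])
  also have "\<dots> = (\<Sum>i<m. v i) + tailsum v m"
    by (simp add: cl_def)
  also have "\<dots> = (\<Sum>i<m. v i) + (\<Sum>i=m..max N0 m. v i)"
    unfolding tailsum_eq_sum_atLeastAtMost[OF v] ..
  also have "\<dots> = norm1 v"
    by (simp add: norm1_eq_sum_atMost[OF v] sum.union_disjoint[symmetric]
        ivl_disj_int_one ivl_disj_un_one)
  finally show ?thesis .
qed

lemma norm1_phi:
  assumes "\<forall>m\<le>n'. inV (\<gamma> m n')" "inV v"
  shows "norm1 (phi \<gamma> n' v) = (\<Sum>n\<in>{n. v n \<noteq> 0}. v n * norm1 (\<gamma> (min n n') n'))"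
proof -
  have cl: "\<forall>i>n'. cl (min n n') u i = 0" for n u by (simp add: cl_def)
  then have "\<forall>i>n'. phi \<gamma> n' v i = 0" by (simp add: phi_def)
  then have "norm1 (phi \<gamma> n' v)
      = (\<Sum>n\<in>{n. v n \<noteq> 0}. v n * (\<Sum>i\<le>n'. cl (min n n') (\<gamma> (min n n') n') i))"
    by (simp add: norm1_eq_sum_atMost phi_def sum.swap[of _ "{..n'}"] sum_distrib_left)
  also have "\<dots> = (\<Sum>n\<in>{n. v n \<noteq> 0}. v n * norm1 (\<gamma> (min n n') n'))"
    by (simp add: norm1_eq_sum_atMost[OF cl, symmetric] norm1_cl assms(1))
  finally show ?thesis .
qed

lemma tailsum_eq_add_tailsum_Suc:
  assumes "inV v"
  shows "tailsum v J = v J + tailsum v (Suc J)"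
proof -
  obtain N0 where "\<forall>i>N0. v i = 0" using inV_imp_bounded_support[OF assms] by blast
  then have v: "\<forall>i>max N0 J. v i = 0" by simp
  show ?thesis
    unfolding tailsum_eq_sum_atLeastAtMost[OF v] by (simp add: sum.atLeast_Suc_atMost)
qed

lemma maxfam_singleton:
  assumes "inV v"
  shows "maxfam {v} = v"
proof
  show "maxfam {v} J = v J" for J
    using tailsum_eq_add_tailsum_Suc[OF assms, of J] by (simp add: maxfam_def)
qed

lemma max_hist_0: "max_hist 0 n' = unitvec 0"
proof -
  have "{layer_hist 0 n' W b | W b. True} = {unitvec 0}" by (auto simp: layer_hist_def)
  moreover have "inV (unitvec 0)" by (simp add: inV_def unitvec_def)
  ultimately show ?thesis by (simp add: max_hist_def maxfam_singleton)
qed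

lemma norm1_unitvec: "norm1 (unitvec i) = 1"
  by (simp add: norm1_def unitvec_def)

lemma inGamma_norm1_mono:
  assumes "inGamma \<gamma>" "1 \<le> n'"
  shows "mono (\<lambda>n. norm1 (\<gamma> (min n n') n'))"
proof (rule monoI)
  fix a b :: nat
  assume "a \<le> b"
  then have "preceq (\<gamma> (min a n') n') (\<gamma> (min b n') n')"
    using assms unfolding inGamma_def by auto
  then show "norm1 (\<gamma> (min a n') n') \<le> norm1 (\<gamma> (min b n') n')"
    by (rule preceq_norm1_le)
qed

lemma inGamma_norm1_pos:
  assumes "inGamma \<gamma>" "1 \<le> n'"
  shows "0 < norm1 (\<gamma> 0 n')"
proof -
  have "preceq (unitvec 0) (\<gamma> 0 n')"
    using assms max_hist_0 unfolding inGamma_def by (metis le0)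
  then have "norm1 (unitvec 0) \<le> norm1 (\<gamma> 0 n')" by (rule preceq_norm1_le)
  then show ?thesis by (simp add: norm1_unitvec)
qed

theorem mainTheorem6:
  fixes \<gamma> :: "nat \<Rightarrow> nat \<Rightarrow> nat \<Rightarrow> nat" and n' :: nat and v1 v2 :: "nat \<Rightarrow> nat"
  assumes "inGamma \<gamma>" and "1 \<le> n'" and "inV v1" and "inV v2"
    and "preceq v1 v2" and "norm1 v1 < norm1 v2"
  shows "norm1 (phi \<gamma> n' v1) < norm1 (phi \<gamma> n' v2)"
proof -
  have "\<forall>m\<le>n'. inV (\<gamma> m n')" using assms(1,2) by (simp add: inGamma_def)
  moreover have "mono (\<lambda>n. norm1 (\<gamma> (min n n') n'))"
    using assms(1,2) by (rule inGamma_norm1_mono)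
  moreover have "0 < norm1 (\<gamma> (min 0 n') n')"
    using inGamma_norm1_pos[OF assms(1,2)] by simp
  ultimately show ?thesis
    using weighted_sum_strict_mono_preceq[OF _ _ assms(3-6)]
    by (simp add: norm1_phi assms(3,4))
qed

end
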